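(* Let $K,T\subseteq\mathbb R^d$ be unconditional convex sets. Then \[ \gamma_d(K+T)\,\gamma_d(K\cap T)\;\ge\;\gamma_d(K)\,\gamma_d(T). \]
   Context: $\gamma_d$ denotes the standard Gaussian probability measure on $\mathbb R^d$, with density proportional to $e^{-\|x\|^2/2}$. $K+T=\{x+y: x\in K,\ y\in T\}$ is the Minkowski sum. A set is unconditional if it is symmetric with respect to every coordinate hyperplane, i.e. invariant under $(x_1,\dots,x_d)\mapsto(\pm x_1,\dots,\pm x_d)$ for every choice of signs. *)

theory Defs
  imports "HOL-Analysis.Analysis"
begin

definition gauss_density :: "real ^ 'n \<Rightarrow> real" where
  "gauss_density x = exp (- (norm x)\<^sup>2 / 2) / (sqrt (2 * pi)) ^ CARD('n)"

text \<open>Standard Gaussian probability measure gamma_d, as a measure on the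
  Lebesgue sigma-algebra (convex sets are Lebesgue measurable but need not be Borel).\<close>
definition gaussian :: "(real ^ 'n) measure" where
  "gaussian = density lebesgue (\<lambda>x. ennreal (gauss_density x))"

definition gamma :: "(real ^ 'n) set \<Rightarrow> real" where
  "gamma A = measure gaussian A"

definition unconditional :: "(real ^ 'n) set \<Rightarrow> bool" where
  "unconditional K \<longleftrightarrow>
     (\<forall>x\<in>K. \<forall>s :: 'n \<Rightarrow> real. (\<forall>i. s i = 1 \<or> s i = -1) \<longrightarrow> (\<chi> i. s i * x $ i) \<in> K)"

definition minkowski_sum :: "(real ^ 'n) set \<Rightarrow> (real ^ 'n) set \<Rightarrow> (real ^ 'n) set" where
  "minkowski_sum K T = {x + y | x y. x \<in> K \<and> y \<in> T}"

end

theory Submission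
  imports Defs "HOL-Probability.Distributions"
begin

text \<open>
  An unconditional convex set is closed under coordinatewise shrinking of absolute values.
  Hence, for \<open>x \<in> K\<close> and \<open>y \<in> T\<close>, the vector taking in each coordinate the entry of larger
  absolute value lies in \<open>K + T\<close>, and the one taking the entry of smaller absolute value lies
  in \<open>K \<inter> T\<close>. The Gaussian density is a product of even one-dimensional densities, so it is
  multiplicative for this pair of operations, and the inequality becomes an instance of a
  four functions (Ahlswede--Daykin) inequality. That inequality is proved on the line by
  symmetrizing in the two variables and extended to \<open>\<real>\<^sup>n\<close> by Fubini. Boundaries of convex sets
  are null, which lets us replace the sets by their (Borel) interiors and closures.
\<close>

definition abs_join :: "real \<Rightarrow> real \<Rightarrow> real" where
  "abs_join s t = (if \<bar>t\<bar> \<le> \<bar>s\<bar> then s else t)"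

definition abs_meet :: "real \<Rightarrow> real \<Rightarrow> real" where
  "abs_meet s t = (if \<bar>t\<bar> \<le> \<bar>s\<bar> then t else s)"

lemma ennreal_add_le_add_of_mult_le:
  fixes p q u v :: ennreal
  assumes "p \<le> u" "q \<le> u" "p * q \<le> u * v"
  shows "p + q \<le> u + v"
proof (cases "u = 0 \<or> u = \<infinity> \<or> v = \<infinity>")
  case True
  then show ?thesis using assms by auto
next
  case False
  then obtain u' v' where u: "u = ennreal u'" "u' > 0" and v: "v = ennreal v'" "v' \<ge> 0"
    by (cases u; cases v) auto
  obtain p' q' where p: "p = ennreal p'" "p' \<ge> 0" and q: "q = ennreal q'" "q' \<ge> 0"
    using assms(1,2) u by (cases p; cases q) (auto simp: top_unique)
  have "p' \<le> u'" "q' \<le> u'" "p' * q' \<le> u' * v'"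
    using assms u v p q by (simp_all add: ennreal_mult'[symmetric])
  \<comment> \<open>expand \<open>(u - p) (u - q) \<ge> 0\<close>\<close>
  then have "u' * (p' + q') \<le> u' * (u' + v')"
    using mult_nonneg_nonneg[of "u' - p'" "u' - q'"] by (simp add: algebra_simps)
  then have "p' + q' \<le> u' + v'" using u by simp
  then show ?thesis using u v p q by (simp flip: ennreal_plus)
qed

lemma four_functions_pointwise:
  fixes g1 g2 g3 g4 :: "real \<Rightarrow> ennreal"
  assumes le: "\<And>s t. g1 s * g2 t \<le> g3 (abs_join s t) * g4 (abs_meet s t)"
  shows "g1 s * g2 t + g1 t * g2 s \<le> g3 s * g4 t + g3 t * g4 s"
proof -
  have swap: "g1 s * g2 t + g1 t * g2 s \<le> g3 s * g4 t + g3 t * g4 s" if "\<bar>s\<bar> < \<bar>t\<bar>" for s t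
  proof -
    have "(g1 s * g2 t) * (g1 t * g2 s) = (g1 t * g2 t) * (g1 s * g2 s)" by (simp add: ac_simps)
    also have "\<dots> \<le> (g3 t * g4 t) * (g3 s * g4 s)"
      using le[of t t] le[of s s] by (auto simp: abs_join_def abs_meet_def intro: mult_mono)
    also have "\<dots> = (g3 t * g4 s) * (g3 s * g4 t)" by (simp add: ac_simps)
    finally have "g1 s * g2 t + g1 t * g2 s \<le> g3 t * g4 s + g3 s * g4 t"
      using le[of s t] le[of t s] that
      by (intro ennreal_add_le_add_of_mult_le) (auto simp: abs_join_def abs_meet_def)
    then show ?thesis by (simp add: add.commute)
  qed
  consider "\<bar>s\<bar> < \<bar>t\<bar>" | "\<bar>t\<bar> < \<bar>s\<bar>" | "\<bar>s\<bar> = \<bar>t\<bar>" by linarith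
  then show ?thesis
  proof cases
    case 2
    then show ?thesis using swap[of t s] by (simp add: add.commute)
  next
    case 3
    then show ?thesis
      using le[of s t] le[of t s] by (intro add_mono) (auto simp: abs_join_def abs_meet_def)
  qed (rule swap)
qed

lemma nn_integral_lborel_symmetrized_times:
  fixes f g :: "real \<Rightarrow> ennreal"
  assumes [measurable]: "f \<in> borel_measurable borel" "g \<in> borel_measurable borel"
  shows "(\<integral>\<^sup>+s. \<integral>\<^sup>+t. f s * g t + f t * g s \<partial>lborel \<partial>lborel)
    = 2 * (integral\<^sup>N lborel f * integral\<^sup>N lborel g)"
  by (simp add: nn_integral_add nn_integral_cmult nn_integral_multc mult_2)

lemma four_functions_lborel:
  fixes g1 g2 g3 g4 :: "real \<Rightarrow> ennreal"
  assumes [measurable]: "g1 \<in> borel_measurable borel" "g2 \<in> borel_measurable borel"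
    "g3 \<in> borel_measurable borel" "g4 \<in> borel_measurable borel"
  assumes le: "\<And>s t. g1 s * g2 t \<le> g3 (abs_join s t) * g4 (abs_meet s t)"
  shows "integral\<^sup>N lborel g1 * integral\<^sup>N lborel g2 \<le> integral\<^sup>N lborel g3 * integral\<^sup>N lborel g4"
proof -
  have "2 * (integral\<^sup>N lborel g1 * integral\<^sup>N lborel g2)
      = (\<integral>\<^sup>+s. \<integral>\<^sup>+t. g1 s * g2 t + g1 t * g2 s \<partial>lborel \<partial>lborel)"
    by (simp add: nn_integral_lborel_symmetrized_times)
  also have "\<dots> \<le> (\<integral>\<^sup>+s. \<integral>\<^sup>+t. g3 s * g4 t + g3 t * g4 s \<partial>lborel \<partial>lborel)"
    by (intro nn_integral_mono four_functions_pointwise le)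
  also have "\<dots> = 2 * (integral\<^sup>N lborel g3 * integral\<^sup>N lborel g4)"
    by (simp add: nn_integral_lborel_symmetrized_times)
  finally show ?thesis by (simp add: ennreal_mult_le_mult_iff)
qed

lemma four_functions_PiM_lborel:
  fixes I :: "'i set"
  defines "M \<equiv> PiM I (\<lambda>_. lborel :: real measure)"
  assumes "finite I"
    and "f1 \<in> borel_measurable M" "f2 \<in> borel_measurable M"
    and "f3 \<in> borel_measurable M" "f4 \<in> borel_measurable M"
    and "\<And>x y. x \<in> space M \<Longrightarrow> y \<in> space M \<Longrightarrow>
       f1 x * f2 y \<le> f3 (\<lambda>k. abs_join (x k) (y k)) * f4 (\<lambda>k. abs_meet (x k) (y k))"
  shows "integral\<^sup>N M f1 * integral\<^sup>N M f2 \<le> integral\<^sup>N M f3 * integral\<^sup>N M f4"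
proof -
  interpret product_sigma_finite "\<lambda>_::'i. lborel :: real measure" by standard
  show ?thesis using assms(2-) unfolding M_def
  proof (induction I arbitrary: f1 f2 f3 f4 rule: finite_induct)
    case empty
    show ?case
      using empty.prems(5)[of "\<lambda>_. undefined" "\<lambda>_. undefined"]
      by (simp add: nn_integral_empty space_PiM abs_join_def abs_meet_def)
  next
    case (insert i I f1 f2 f3 f4)
    interpret pair_sigma_finite lborel "PiM I (\<lambda>_. lborel)"
      by (simp add: pair_sigma_finite_def lborel.sigma_finite_measure_axioms
          product_sigma_finite.sigma_finite[OF _ insert.hyps(1)] product_sigma_finite_def)
    note [measurable] = insert.prems(1-4)
    define slice where "slice f s = (\<integral>\<^sup>+x. f (x(i := s)) \<partial>PiM I (\<lambda>_. lborel))"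
      for f :: "('i \<Rightarrow> real) \<Rightarrow> ennreal" and s
    have slice_measurable: "slice f \<in> borel_measurable borel"
      if [measurable]: "f \<in> borel_measurable (PiM (insert i I) (\<lambda>_. lborel))" for f
      unfolding slice_def[abs_def]
      by (rule M2.borel_measurable_nn_integral[unfolded split_beta']) measurable
    have integral_slice: "integral\<^sup>N (PiM (insert i I) (\<lambda>_. lborel)) f = integral\<^sup>N lborel (slice f)"
      if "f \<in> borel_measurable (PiM (insert i I) (\<lambda>_. lborel))" for f
      unfolding slice_def by (rule product_nn_integral_insert_rev) (use insert.hyps that in auto)
    have "slice f1 s * slice f2 t \<le> slice f3 (abs_join s t) * slice f4 (abs_meet s t)" for s t
      unfolding slice_def
    proof (rule insert.IH)
      fix x y :: "'i \<Rightarrow> real"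
      assume "x \<in> space (PiM I (\<lambda>_. lborel))" "y \<in> space (PiM I (\<lambda>_. lborel))"
      then have "x(i := s) \<in> space (PiM (insert i I) (\<lambda>_. lborel))"
        "y(i := t) \<in> space (PiM (insert i I) (\<lambda>_. lborel))"
        by (auto simp: space_PiM PiE_def extensional_def)
      from insert.prems(5)[OF this]
      show "f1 (x(i := s)) * f2 (y(i := t))
        \<le> f3 ((\<lambda>k. abs_join (x k) (y k))(i := abs_join s t)) * f4 ((\<lambda>k. abs_meet (x k) (y k))(i := abs_meet s t))"
        by (simp add: fun_upd_def if_distrib[of "abs_join _"] if_distrib[of "abs_meet _"] cong: if_cong)
    qed measurable
    then show ?case
      by (simp add: integral_slice four_functions_lborel slice_measurable)
  qed
qed

lemma unconditional_convex_scale_coordinate: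
  fixes K :: "(real ^ 'n) set"
  assumes "convex K" "unconditional K" "x \<in> K" "\<bar>c\<bar> \<le> 1"
  shows "(\<chi> i. if i = j then c * x $ i else x $ i) \<in> K"
proof -
  define x' where "x' = (\<chi> i. (if i = j then -1 else 1) * x $ i)"
  have "x' \<in> K"
    using assms(2,3) unfolding unconditional_def x'_def by auto
  moreover have "0 \<le> (1 + c) / 2" "0 \<le> 1 - (1 + c) / 2"
    using assms(4) by auto
  ultimately have "((1 + c) / 2) *\<^sub>R x + (1 - (1 + c) / 2) *\<^sub>R x' \<in> K"
    using assms(1,3) by (intro convexD) auto
  moreover have "((1 + c) / 2) *\<^sub>R x + (1 - (1 + c) / 2) *\<^sub>R x' = (\<chi> i. if i = j then c * x $ i else x $ i)"
    by (auto simp: vec_eq_iff x'_def field_simps)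
  ultimately show ?thesis by simp
qed

lemma unconditional_convex_scale:
  fixes K :: "(real ^ 'n) set"
  assumes "convex K" "unconditional K" "x \<in> K" "\<And>i. \<bar>c i\<bar> \<le> 1"
  shows "(\<chi> i. c i * x $ i) \<in> K"
proof -
  have "(\<chi> i. if i \<in> S then c i * x $ i else x $ i) \<in> K" if "finite S" for S
    using that
  proof (induction S rule: finite_induct)
    case empty
    then show ?case using assms(3) by simp
  next
    case (insert j S)
    let ?z = "\<chi> i. if i \<in> S then c i * x $ i else x $ i"
    have "(\<chi> i. if i = j then c j * ?z $ i else ?z $ i) \<in> K"
      by (rule unconditional_convex_scale_coordinate[OF assms(1,2) insert.IH assms(4)])
    moreover have "(\<chi> i. if i = j then c j * ?z $ i else ?z $ i)
        = (\<chi> i. if i \<in> insert j S then c i * x $ i else x $ i)"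
      using insert.hyps(2) by (auto simp: vec_eq_iff)
    ultimately show ?case by simp
  qed
  from this[of UNIV] show ?thesis by simp
qed

lemma unconditional_convex_abs_le:
  fixes K :: "(real ^ 'n) set"
  assumes "convex K" "unconditional K" "x \<in> K" "\<And>i. \<bar>w $ i\<bar> \<le> \<bar>x $ i\<bar>"
  shows "w \<in> K"
proof -
  define c where "c i = (if x $ i = 0 then 0 else w $ i / x $ i)" for i
  have "\<bar>c i\<bar> \<le> 1" for i
    using assms(4)[of i] by (simp add: c_def divide_le_eq_1)
  moreover have "w $ i = c i * x $ i" for i
    using assms(4)[of i] by (auto simp: c_def)
  then have "w = (\<chi> i. c i * x $ i)"
    by (simp add: vec_eq_iff)
  ultimately show ?thesis
    using assms(1-3) unconditional_convex_scale by metis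
qed

lemma unconditional_convex_abs_join_meet_mem:
  fixes K T :: "(real ^ 'n) set"
  assumes "convex K" "convex T" "unconditional K" "unconditional T" "x \<in> K" "y \<in> T"
  shows "(\<chi> i. abs_join (x $ i) (y $ i)) \<in> K + T"
    and "(\<chi> i. abs_meet (x $ i) (y $ i)) \<in> K \<inter> T"
proof -
  let ?u = "\<chi> i. if \<bar>y $ i\<bar> \<le> \<bar>x $ i\<bar> then x $ i else 0"
  let ?v = "\<chi> i. if \<bar>y $ i\<bar> \<le> \<bar>x $ i\<bar> then 0 else y $ i"
  have "(\<chi> i. abs_join (x $ i) (y $ i)) = ?u + ?v"
    by (auto simp: vec_eq_iff abs_join_def)
  also have "\<dots> \<in> K + T"
  proof (rule set_plus_intro)
    show "?u \<in> K" by (rule unconditional_convex_abs_le[OF assms(1,3,5)]) auto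
    show "?v \<in> T" by (rule unconditional_convex_abs_le[OF assms(2,4,6)]) auto
  qed
  finally show "(\<chi> i. abs_join (x $ i) (y $ i)) \<in> K + T" .
  show "(\<chi> i. abs_meet (x $ i) (y $ i)) \<in> K \<inter> T"
  proof
    show "(\<chi> i. abs_meet (x $ i) (y $ i)) \<in> K"
      by (rule unconditional_convex_abs_le[OF assms(1,3,5)]) (auto simp: abs_meet_def)
    show "(\<chi> i. abs_meet (x $ i) (y $ i)) \<in> T"
      by (rule unconditional_convex_abs_le[OF assms(2,4,6)]) (auto simp: abs_meet_def)
  qed
qed

definition coords_to_vec :: "(real ^ 'n \<Rightarrow> real) \<Rightarrow> real ^ 'n" where
  "coords_to_vec \<omega> = (\<Sum>b\<in>Basis. \<omega> b *\<^sub>R b)"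

lemma coords_to_vec_measurable [measurable]:
  "coords_to_vec \<in> borel_measurable (PiM Basis (\<lambda>_. lborel))"
  unfolding coords_to_vec_def by measurable

lemma inner_coords_to_vec: "b \<in> Basis \<Longrightarrow> coords_to_vec \<omega> \<bullet> b = \<omega> b"
  by (simp add: coords_to_vec_def inner_sum_left inner_Basis if_distrib sum.delta cong: if_cong)

lemma coords_to_vec_nth: "coords_to_vec \<omega> $ i = \<omega> (axis i 1)"
  by (simp add: cart_eq_inner_axis inner_coords_to_vec axis_in_Basis_iff)

lemma coords_to_vec_map2:
  "coords_to_vec (\<lambda>b. f (x b) (y b)) = (\<chi> i. f (coords_to_vec x $ i) (coords_to_vec y $ i))"
  by (simp add: vec_eq_iff coords_to_vec_nth)

lemma norm_coords_to_vec_squared: "(norm (coords_to_vec \<omega>))\<^sup>2 = (\<Sum>b\<in>Basis. (\<omega> b)\<^sup>2)"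
proof -
  have "(norm (coords_to_vec \<omega>))\<^sup>2 = (\<Sum>b\<in>Basis. (coords_to_vec \<omega> \<bullet> b) * (coords_to_vec \<omega> \<bullet> b))"
    unfolding power2_norm_eq_inner by (rule euclidean_inner)
  then show ?thesis
    by (simp add: inner_coords_to_vec power2_eq_square)
qed

lemma gauss_density_coords_to_vec:
  "gauss_density (coords_to_vec \<omega>) = (\<Prod>b\<in>Basis. std_normal_density (\<omega> b))"
proof -
  have "exp (- (norm (coords_to_vec \<omega>))\<^sup>2 / 2) = (\<Prod>b\<in>Basis. exp (- (\<omega> b)\<^sup>2 / 2))"
    by (simp add: norm_coords_to_vec_squared exp_sum[symmetric] sum_negf sum_divide_distrib)
  moreover have "(sqrt (2 * pi)) ^ CARD('n) = (\<Prod>b\<in>(Basis :: (real ^ 'n) set). sqrt (2 * pi))"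
    using DIM_cart[where 'a=real and 'b='n] by simp
  ultimately show ?thesis
    by (simp add: gauss_density_def std_normal_density_def prod_dividef)
qed

lemma emeasure_gaussian_coords:
  fixes A :: "(real ^ 'n) set"
  assumes [measurable]: "A \<in> sets borel"
  shows "emeasure gaussian A = (\<integral>\<^sup>+\<omega>. indicator A (coords_to_vec \<omega>) *
    (\<Prod>b\<in>Basis. ennreal (std_normal_density (\<omega> b))) \<partial>PiM Basis (\<lambda>_. lborel))"
proof -
  have "emeasure gaussian A = (\<integral>\<^sup>+x. ennreal (gauss_density x) * indicator A x \<partial>lebesgue)"
    unfolding gaussian_def gauss_density_def
    by (rule emeasure_density) (auto intro: measurable_completion sets_completionI_sets)
  also have "\<dots> = (\<integral>\<^sup>+x. ennreal (gauss_density x) * indicator A x \<partial>lborel)"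
    by (rule nn_integral_completion)
  also have "\<dots> = (\<integral>\<^sup>+\<omega>. ennreal (gauss_density (coords_to_vec \<omega>)) * indicator A (coords_to_vec \<omega>)
      \<partial>PiM Basis (\<lambda>_. lborel))"
    unfolding lborel_eq[where 'a="real ^ 'n"]
    by (subst nn_integral_distr) (auto simp: coords_to_vec_def[abs_def] gauss_density_def)
  also have "\<dots> = (\<integral>\<^sup>+\<omega>. indicator A (coords_to_vec \<omega>) *
      (\<Prod>b\<in>Basis. ennreal (std_normal_density (\<omega> b))) \<partial>PiM Basis (\<lambda>_. lborel))"
    by (simp add: gauss_density_coords_to_vec prod_ennreal mult.commute)
  finally show ?thesis .
qed

lemma prob_space_gaussian: "prob_space (gaussian :: (real ^ 'n) measure)"
proof
  interpret product_sigma_finite "\<lambda>_::real ^ 'n. lborel :: real measure" by standard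
  have "emeasure gaussian (UNIV :: (real ^ 'n) set)
      = (\<integral>\<^sup>+\<omega>. (\<Prod>b\<in>Basis. ennreal (std_normal_density (\<omega> b)))
          \<partial>PiM (Basis :: (real ^ 'n) set) (\<lambda>_. lborel))"
    by (simp add: emeasure_gaussian_coords)
  also have "\<dots> = (\<Prod>b\<in>(Basis :: (real ^ 'n) set). \<integral>\<^sup>+t. ennreal (std_normal_density t) \<partial>lborel)"
    by (rule product_nn_integral_prod) auto
  also have "\<dots> = 1"
    by (simp add: nn_integral_eq_integral)
  finally show "emeasure gaussian (space (gaussian :: (real ^ 'n) measure)) = 1"
    by (simp add: gaussian_def)
qed

lemma null_sets_lebesgue_gaussian:
  "N \<in> null_sets lebesgue \<Longrightarrow> N \<in> null_sets (gaussian :: (real ^ 'n) measure)"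
  unfolding gaussian_def gauss_density_def
  by (subst null_sets_density_iff) (auto intro: measurable_completion AE_not_in)

lemma emeasure_gaussian_convex:
  fixes S :: "(real ^ 'n) set"
  assumes "convex S"
  shows "emeasure gaussian (interior S) = emeasure gaussian S"
    and "emeasure gaussian (closure S) = emeasure gaussian S"
proof -
  have frontier: "frontier S \<in> null_sets lebesgue"
    using negligible_convex_frontier[OF assms] negligible_iff_null_sets by blast
  have "S - interior S \<in> null_sets lebesgue"
    by (rule null_sets_completion_subset[OF _ frontier]) (auto simp: frontier_def dest: closure_subset[THEN subsetD])
  then have "emeasure gaussian (interior S \<union> (S - interior S)) = emeasure gaussian (interior S)"
    by (intro emeasure_Un_null_set null_sets_lebesgue_gaussian) (auto simp: gaussian_def)
  moreover have "emeasure gaussian (interior S \<union> frontier S) = emeasure gaussian (interior S)"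
    using frontier by (intro emeasure_Un_null_set null_sets_lebesgue_gaussian) (auto simp: gaussian_def)
  moreover have "interior S \<union> (S - interior S) = S" "interior S \<union> frontier S = closure S"
    using interior_subset closure_subset by (auto simp: frontier_def)
  ultimately show "emeasure gaussian (interior S) = emeasure gaussian S"
    and "emeasure gaussian (closure S) = emeasure gaussian S"
    by simp_all
qed

lemma gaussian_four_sets:
  fixes A B C D :: "(real ^ 'n) set"
  assumes [measurable]: "A \<in> sets borel" "B \<in> sets borel" "C \<in> sets borel" "D \<in> sets borel"
  assumes join_meet: "\<And>x y. x \<in> A \<Longrightarrow> y \<in> B \<Longrightarrow>
    (\<chi> i. abs_join (x $ i) (y $ i)) \<in> C \<and> (\<chi> i. abs_meet (x $ i) (y $ i)) \<in> D"
  shows "emeasure gaussian A * emeasure gaussian B \<le> emeasure gaussian C * emeasure gaussian D"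
proof -
  define w where "w E \<omega> = indicator E (coords_to_vec \<omega>) * (\<Prod>b\<in>Basis. ennreal (std_normal_density (\<omega> b)))"
    for E and \<omega> :: "real ^ 'n \<Rightarrow> real"
  have w_measurable [measurable]: "w E \<in> borel_measurable (PiM Basis (\<lambda>_. lborel))"
    if [measurable]: "E \<in> sets borel" for E
    unfolding w_def[abs_def] by measurable
  have "w A x * w B y \<le> w C (\<lambda>b. abs_join (x b) (y b)) * w D (\<lambda>b. abs_meet (x b) (y b))" for x y
  proof (cases "coords_to_vec x \<in> A \<and> coords_to_vec y \<in> B")
    case True
    have "coords_to_vec (\<lambda>b. abs_join (x b) (y b)) \<in> C \<and> coords_to_vec (\<lambda>b. abs_meet (x b) (y b)) \<in> D"
      using join_meet[OF True[THEN conjunct1] True[THEN conjunct2]]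
      by (simp add: coords_to_vec_map2)
    moreover have "(\<Prod>b\<in>Basis. std_normal_density (x b)) * (\<Prod>b\<in>Basis. std_normal_density (y b))
        = (\<Prod>b\<in>Basis. std_normal_density (abs_join (x b) (y b)))
          * (\<Prod>b\<in>Basis. std_normal_density (abs_meet (x b) (y b)))"
      unfolding prod.distrib[symmetric] by (intro prod.cong) (auto simp: abs_join_def abs_meet_def)
    ultimately show ?thesis
      using True by (simp add: w_def prod_ennreal prod_nonneg flip: ennreal_mult)
  qed (auto simp: w_def)
  then have "integral\<^sup>N (PiM Basis (\<lambda>_. lborel)) (w A) * integral\<^sup>N (PiM Basis (\<lambda>_. lborel)) (w B)
      \<le> integral\<^sup>N (PiM Basis (\<lambda>_. lborel)) (w C) * integral\<^sup>N (PiM Basis (\<lambda>_. lborel)) (w D)"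
    by (intro four_functions_PiM_lborel) auto
  then show ?thesis
    by (simp add: emeasure_gaussian_coords w_def[abs_def])
qed

lemma emeasure_gaussian_Minkowski_Int:
  fixes K T :: "(real ^ 'n) set"
  assumes "convex K" "convex T" "unconditional K" "unconditional T"
  shows "emeasure gaussian K * emeasure gaussian T \<le> emeasure gaussian (K + T) * emeasure gaussian (K \<inter> T)"
proof -
  have "convex (K + T)" "convex (K \<inter> T)"
    using assms(1,2) by (simp_all add: convex_set_plus convex_Int)
  have join_meet: "(\<chi> i. abs_join (x $ i) (y $ i)) \<in> closure (K + T)
      \<and> (\<chi> i. abs_meet (x $ i) (y $ i)) \<in> closure (K \<inter> T)"
    if "x \<in> interior K" "y \<in> interior T" for x y
    using unconditional_convex_abs_join_meet_mem[OF assms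
        interior_subset[THEN subsetD, OF that(1)] interior_subset[THEN subsetD, OF that(2)]]
      closure_subset
    by blast
  \<comment> \<open>interiors and closures are Borel, while convex sets need only be Lebesgue measurable\<close>
  have "emeasure gaussian K * emeasure gaussian T
      = emeasure gaussian (interior K) * emeasure gaussian (interior T)"
    using assms(1,2) by (simp add: emeasure_gaussian_convex)
  also have "\<dots> \<le> emeasure gaussian (closure (K + T)) * emeasure gaussian (closure (K \<inter> T))"
    using join_meet by (intro gaussian_four_sets) auto
  also have "\<dots> = emeasure gaussian (K + T) * emeasure gaussian (K \<inter> T)"
    using \<open>convex (K + T)\<close> \<open>convex (K \<inter> T)\<close> by (simp add: emeasure_gaussian_convex)
  finally show ?thesis .
qed

theorem theorem1p5:
  fixes K T :: "(real ^ 'n) set"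
  assumes "convex K" and "convex T"
    and "unconditional K" and "unconditional T"
  shows "gamma (minkowski_sum K T) * gamma (K \<inter> T) \<ge> gamma K * gamma T"
proof -
  interpret prob_space "gaussian :: (real ^ 'n) measure" by (rule prob_space_gaussian)
  have "minkowski_sum K T = K + T"
    by (auto simp: minkowski_sum_def set_plus_def)
  moreover have "ennreal (gamma K) * ennreal (gamma T) \<le> ennreal (gamma (K + T)) * ennreal (gamma (K \<inter> T))"
    using emeasure_gaussian_Minkowski_Int[OF assms] by (simp add: gamma_def emeasure_eq_measure)
  ultimately show ?thesis
    by (simp add: gamma_def flip: ennreal_mult)
qed

end
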